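(* There is a polynomial $P$ such that for every MEMDP $\Gamma=(Q,A,E,(\delta_e)_{e\in E})$ with rational transition probabilities there is a function $\varepsilon\mapsto m(\Gamma,\varepsilon)\in\mathbb N$ satisfying, for all $0<\varepsilon<1$, $m(\Gamma,\varepsilon)\le P(k,2^l,x)$ where $k=|E|$, $l$ is the maximum number of bits needed to write any transition probability of $\Gamma$ (numerator and denominator in binary), and $x=\lceil\log_2(1/\varepsilon)\rceil$; and such that for every prior $b\in\mathcal D(E)$, every state $q\in Q$, every strategy $\sigma\in\mathrm{Strat}(Q,A)$ and every environment $e\in E$: $$\mathbb P^\sigma_q\big[\Gamma[e],\ \{\rho:\mathrm{nb}_{\mathrm{dstg}}(\rho)\ge m(\Gamma,\varepsilon)\}\cap \mathrm{NeverSmallBelief}(b,\varepsilon)\big]\le\varepsilon .$$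
   Context: For a set $X$, $\mathcal D(X)$ is the set of distributions on $X$ (countable support, summing to 1). An MDP is $G=(Q,A,\delta)$ with $Q,A$ finite non-empty and $\delta:Q\times A\to\mathcal D(Q)$; finite runs are in $Q\cdot(A\cdot Q)^*$, infinite runs in $(Q\cdot A)^\omega$; a strategy is $\sigma:Q\cdot(A\cdot Q)^*\to\mathcal D(A)$, and $\mathbb P^\sigma_q[G,\cdot]$ is the induced probability measure on infinite runs from $q$ (the cylinder of $q_0(a_1,q_1)\cdots(a_n,q_n)$ has probability $[q_0=q]\prod_i\sigma(\text{prefix up to }q_{i-1})(a_i)\delta(q_{i-1},a_i)(q_i)$). An MEMDP is $\Gamma=(Q,A,E,(\delta_e)_{e\in E})$ with $E$ finite non-empty and each $\Gamma[e]=(Q,A,\delta_e)$ an MDP. A pair $(q,a)$ is $(e,e')$-distinguishing ($e\ne e'$) if $\delta_e(q,a)\ne\delta_{e'}(q,a)$; $\mathrm{Dstg}(\Gamma)$ is the set of pairs that are $(e,e')$-distinguishing for some $e\ne e'$. Belief update: for $b\in\mathcal D(E)$, $p[b,q,a](q'):=\sum_e b(e)\delta_e(q,a)(q')$, and if $p[b,q,a](q')>0$, $\lambda[b,q,a,q'](e):=b(e)\delta_e(q,a)(q')/p[b,q,a](q')$ (arbitrary distribution otherwise). The likelihood map is $\mathrm{lk}_b(q):=b$ and $\mathrm{lk}_b(\rho\cdot(a,q')):=\lambda[\mathrm{lk}_b(\rho),\mathrm{last}(\rho),a,q']$. For an infinite run $\rho$, $\mathrm{nb}_{\mathrm{dstg}}(\rho)\in\mathbb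 N\cup\{\infty\}$ is the number of positions $i$ with $(q_i,a_i)\in\mathrm{Dstg}(\Gamma)$, writing $\rho=(q_0,a_0)(q_1,a_1)\cdots$. $\mathrm{NeverSmallBelief}(b,\varepsilon)$ is the set of infinite runs all of whose finite prefixes $\pi\in Q\cdot(A\cdot Q)^*$ satisfy $\mathrm{lk}_b(\pi)(e')>\varepsilon$ for all $e'\in E$. *)

theory Defs
  imports "HOL-Probability.Probability"
begin

(* A finite run q0 (a1,q1) ... (an,qn) is the pair (q0, [(a1,q1),...,(an,qn)]).
   An infinite run (q0,a0)(q1,a1)... is a stream of (state, action) pairs. *)

type_synonym frun = "nat \<times> (nat \<times> nat) list"
type_synonym irun = "(nat \<times> nat) stream"

definition is_distr :: "nat set \<Rightarrow> (nat \<Rightarrow> real) \<Rightarrow> bool" where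
  "is_distr X d \<longleftrightarrow> (\<forall>x. 0 \<le> d x) \<and> (\<forall>x. x \<notin> X \<longrightarrow> d x = 0) \<and> (\<Sum>x\<in>X. d x) = 1"

definition is_MEMDP ::
  "nat set \<Rightarrow> nat set \<Rightarrow> nat set \<Rightarrow> (nat \<Rightarrow> nat \<Rightarrow> nat \<Rightarrow> nat \<Rightarrow> rat) \<Rightarrow> bool" where
  "is_MEMDP Q A E \<delta> \<longleftrightarrow>
     finite Q \<and> Q \<noteq> {} \<and> finite A \<and> A \<noteq> {} \<and> finite E \<and> E \<noteq> {} \<and>
     (\<forall>e\<in>E. \<forall>q\<in>Q. \<forall>a\<in>A. is_distr Q (\<lambda>q'. of_rat (\<delta> e q a q')))"

definition is_frun :: "nat set \<Rightarrow> nat set \<Rightarrow> frun \<Rightarrow> bool" where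
  "is_frun Q A \<rho> \<longleftrightarrow> fst \<rho> \<in> Q \<and> (\<forall>(a,q')\<in>set (snd \<rho>). a \<in> A \<and> q' \<in> Q)"

definition is_strategy :: "nat set \<Rightarrow> nat set \<Rightarrow> (frun \<Rightarrow> nat \<Rightarrow> real) \<Rightarrow> bool" where
  "is_strategy Q A \<sigma> \<longleftrightarrow> (\<forall>\<rho>. is_frun Q A \<rho> \<longrightarrow> is_distr A (\<sigma> \<rho>))"

definition cyl :: "frun \<Rightarrow> irun set" where
  "cyl \<rho> = {\<omega>. fst (\<omega> !! 0) = fst \<rho> \<and>
       (\<forall>i < length (snd \<rho>). snd (\<omega> !! i) = fst (snd \<rho> ! i) \<and>
                               fst (\<omega> !! Suc i) = snd (snd \<rho> ! i))}"

definition state_before :: "frun \<Rightarrow> nat \<Rightarrow> nat" where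
  "state_before \<rho> i = (if i = 0 then fst \<rho> else snd (snd \<rho> ! (i - 1)))"

definition cyl_prob ::
  "(nat \<Rightarrow> nat \<Rightarrow> nat \<Rightarrow> rat) \<Rightarrow> (frun \<Rightarrow> nat \<Rightarrow> real) \<Rightarrow> nat \<Rightarrow> frun \<Rightarrow> real" where
  "cyl_prob d \<sigma> q \<rho> =
     (if fst \<rho> = q then 1 else 0) *
     (\<Prod>i < length (snd \<rho>).
        \<sigma> (fst \<rho>, take i (snd \<rho>)) (fst (snd \<rho> ! i)) *
        of_rat (d (state_before \<rho> i) (fst (snd \<rho> ! i)) (snd (snd \<rho> ! i))))"

(* M is the probability measure P^sigma_q[G, .] on infinite runs of the MDP G
   with transition function d: the (unique) probability measure on the product
   sigma-algebra of streams whose cylinders have the prescribed probabilities *)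
definition is_run_measure ::
  "(nat \<Rightarrow> nat \<Rightarrow> nat \<Rightarrow> rat) \<Rightarrow> (frun \<Rightarrow> nat \<Rightarrow> real) \<Rightarrow> nat \<Rightarrow> irun measure \<Rightarrow> bool" where
  "is_run_measure d \<sigma> q M \<longleftrightarrow>
     prob_space M \<and> sets M = sets (stream_space (count_space UNIV)) \<and>
     (\<forall>\<rho>. measure M (cyl \<rho>) = cyl_prob d \<sigma> q \<rho>)"

definition Dstg ::
  "nat set \<Rightarrow> nat set \<Rightarrow> nat set \<Rightarrow> (nat \<Rightarrow> nat \<Rightarrow> nat \<Rightarrow> nat \<Rightarrow> rat) \<Rightarrow> (nat \<times> nat) set" where
  "Dstg Q A E \<delta> = {(q,a). q \<in> Q \<and> a \<in> A \<and>
      (\<exists>e\<in>E. \<exists>e'\<in>E. e \<noteq> e' \<and> (\<lambda>q'. \<delta> e q a q') \<noteq> (\<lambda>q'. \<delta> e' q a q'))}"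

definition nb_dstg ::
  "nat set \<Rightarrow> nat set \<Rightarrow> nat set \<Rightarrow> (nat \<Rightarrow> nat \<Rightarrow> nat \<Rightarrow> nat \<Rightarrow> rat) \<Rightarrow> irun \<Rightarrow> enat" where
  "nb_dstg Q A E \<delta> \<omega> =
     (let S = {i. \<omega> !! i \<in> Dstg Q A E \<delta>} in if finite S then enat (card S) else \<infinity>)"

definition bel_p ::
  "nat set \<Rightarrow> (nat \<Rightarrow> nat \<Rightarrow> nat \<Rightarrow> nat \<Rightarrow> rat) \<Rightarrow> (nat \<Rightarrow> real) \<Rightarrow> nat \<Rightarrow> nat \<Rightarrow> nat \<Rightarrow> real" where
  "bel_p E \<delta> b q a q' = (\<Sum>e\<in>E. b e * of_rat (\<delta> e q a q'))"

(* when the observation has probability 0 the belief is left unchanged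
   (the paper allows an arbitrary distribution here) *)
definition bel_upd ::
  "nat set \<Rightarrow> (nat \<Rightarrow> nat \<Rightarrow> nat \<Rightarrow> nat \<Rightarrow> rat) \<Rightarrow> (nat \<Rightarrow> real) \<Rightarrow> nat \<Rightarrow> nat \<Rightarrow> nat \<Rightarrow> (nat \<Rightarrow> real)" where
  "bel_upd E \<delta> b q a q' =
     (if bel_p E \<delta> b q a q' > 0
      then (\<lambda>e. b e * of_rat (\<delta> e q a q') / bel_p E \<delta> b q a q')
      else b)"

fun lk_aux ::
  "nat set \<Rightarrow> (nat \<Rightarrow> nat \<Rightarrow> nat \<Rightarrow> nat \<Rightarrow> rat) \<Rightarrow> (nat \<Rightarrow> real) \<Rightarrow> nat \<Rightarrow> (nat \<times> nat) list \<Rightarrow> (nat \<Rightarrow> real)" where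
  "lk_aux E \<delta> b q [] = b"
| "lk_aux E \<delta> b q ((a,q') # ps) = lk_aux E \<delta> (bel_upd E \<delta> b q a q') q' ps"

definition lk ::
  "nat set \<Rightarrow> (nat \<Rightarrow> nat \<Rightarrow> nat \<Rightarrow> nat \<Rightarrow> rat) \<Rightarrow> (nat \<Rightarrow> real) \<Rightarrow> frun \<Rightarrow> (nat \<Rightarrow> real)" where
  "lk E \<delta> b \<rho> = lk_aux E \<delta> b (fst \<rho>) (snd \<rho>)"

definition prefix_run :: "irun \<Rightarrow> nat \<Rightarrow> frun" where
  "prefix_run \<omega> n = (fst (\<omega> !! 0), map (\<lambda>i. (snd (\<omega> !! i), fst (\<omega> !! Suc i))) [0..<n])"

definition NeverSmallBelief ::
  "nat set \<Rightarrow> (nat \<Rightarrow> nat \<Rightarrow> nat \<Rightarrow> nat \<Rightarrow> rat) \<Rightarrow> (nat \<Rightarrow> real) \<Rightarrow> real \<Rightarrow> irun set" where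
  "NeverSmallBelief E \<delta> b \<epsilon> =
     {\<omega>. \<forall>n. \<forall>e'\<in>E. lk E \<delta> b (prefix_run \<omega> n) e' > \<epsilon>}"

fun bitlen :: "nat \<Rightarrow> nat" where
  "bitlen n = (if n < 2 then 1 else Suc (bitlen (n div 2)))"

definition rat_bits :: "rat \<Rightarrow> nat" where
  "rat_bits r = (case quotient_of r of (p, d) \<Rightarrow> bitlen (nat \<bar>p\<bar>) + bitlen (nat d))"

definition max_bits ::
  "nat set \<Rightarrow> nat set \<Rightarrow> nat set \<Rightarrow> (nat \<Rightarrow> nat \<Rightarrow> nat \<Rightarrow> nat \<Rightarrow> rat) \<Rightarrow> nat" where
  "max_bits Q A E \<delta> = Max {rat_bits (\<delta> e q a q') | e q a q'. e \<in> E \<and> q \<in> Q \<and> a \<in> A \<and> q' \<in> Q}"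

definition poly3 :: "nat \<Rightarrow> (nat \<Rightarrow> nat \<Rightarrow> nat \<Rightarrow> real) \<Rightarrow> real \<Rightarrow> real \<Rightarrow> real \<Rightarrow> real" where
  "poly3 D c y1 y2 y3 = (\<Sum>i<D. \<Sum>j<D. \<Sum>h<D. c i j h * y1 ^ i * y2 ^ j * y3 ^ h)"

end

theory Submission
  imports Defs
begin

(* Fix the true environment e and write k = card E. For a finite run rho with belief
   beta = lk b rho, let N e' rho count the steps of rho whose state-action pair is
   (e, e')-distinguishing, and consider the potential

     Phi rho = (SUM e' : E - {e}. sqrt (beta e' / beta e) * (1 / c) ^ N e' rho).

   Given the state-action pair, the expected value under delta_e of the square root of the
   updated likelihood ratio beta e' / beta e is the old one times the Bhattacharyya
   coefficient of delta_e and delta_e'. Distinct rationals whose denominators have at most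
   l bits differ by at least 4 ^ (-l), so that coefficient is at most c = 1 - 1 / (8 * 16 ^ l)
   whenever the pair is distinguishing. Hence P(cyl rho) * Phi rho, summed over the runs of
   length n on which no belief has dropped to eps, is non-increasing in n and bounded by
   (k - 1) / sqrt eps. If such a run has k * J distinguishing steps, then by pigeonhole J of
   them distinguish e from one e', which forces Phi rho >= sqrt eps / c ^ J; so these runs
   have probability at most (k - 1) * c ^ J / eps, which is at most eps once
   J = 8 * 16 ^ l * (k + 2 * ceil (log2 (1 / eps))). *)

definition frun_snoc :: "frun \<Rightarrow> nat \<Rightarrow> nat \<Rightarrow> frun" where
  "frun_snoc \<rho> a q' = (fst \<rho>, snd \<rho> @ [(a, q')])"

definition last_state :: "frun \<Rightarrow> nat" where
  "last_state \<rho> = state_before \<rho> (length (snd \<rho>))"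

lemma fst_frun_snoc [simp]: "fst (frun_snoc \<rho> a q') = fst \<rho>"
  and snd_frun_snoc [simp]: "snd (frun_snoc \<rho> a q') = snd \<rho> @ [(a, q')]"
  by (simp_all add: frun_snoc_def)

lemma state_before_frun_snoc:
  "i \<le> length (snd \<rho>) \<Longrightarrow> state_before (frun_snoc \<rho> a q') i = state_before \<rho> i"
  by (auto simp: state_before_def frun_snoc_def nth_append)

lemma last_state_eq: "last_state \<rho> = (if snd \<rho> = [] then fst \<rho> else snd (last (snd \<rho>)))"
  by (simp add: last_state_def state_before_def last_conv_nth)

lemma frun_snoc_induct [case_names Nil snoc]:
  assumes "\<And>q0. P (q0, [])" and "\<And>\<rho> a q'. P \<rho> \<Longrightarrow> P (frun_snoc \<rho> a q')"
  shows "P \<rho>"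
proof -
  obtain q0 ps where "\<rho> = (q0, ps)" by (cases \<rho>)
  moreover have "P (q0, ps)"
  proof (induction ps rule: rev_induct)
    case (snoc x xs)
    then show ?case using assms(2)[OF snoc.IH, of "fst x" "snd x"] by (simp add: frun_snoc_def)
  qed (rule assms(1))
  ultimately show ?thesis by simp
qed

lemma is_frun_snoc [simp]:
  "is_frun Q A (frun_snoc \<rho> a q') \<longleftrightarrow> is_frun Q A \<rho> \<and> a \<in> A \<and> q' \<in> Q"
  by (auto simp: is_frun_def frun_snoc_def)

lemma state_before_in:
  assumes "is_frun Q A \<rho>" "i \<le> length (snd \<rho>)"
  shows "state_before \<rho> i \<in> Q"
proof (cases i)
  case (Suc j)
  then have "snd \<rho> ! j \<in> set (snd \<rho>)" using assms(2) by simp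
  then show ?thesis using assms(1) Suc by (auto simp: is_frun_def state_before_def)
qed (use assms in \<open>simp add: is_frun_def state_before_def\<close>)

lemma last_state_in: "is_frun Q A \<rho> \<Longrightarrow> last_state \<rho> \<in> Q"
  by (simp add: last_state_def state_before_in)

lemma cyl_prob_Nil: "cyl_prob d \<sigma> q (q0, []) = (if q0 = q then 1 else 0)"
  by (simp add: cyl_prob_def)

lemma cyl_prob_frun_snoc:
  "cyl_prob d \<sigma> q (frun_snoc \<rho> a q') =
     cyl_prob d \<sigma> q \<rho> * (\<sigma> \<rho> a * of_rat (d (last_state \<rho>) a q'))"
proof -
  let ?f = "\<lambda>\<rho> i. \<sigma> (fst \<rho>, take i (snd \<rho>)) (fst (snd \<rho> ! i)) *
        of_rat (d (state_before \<rho> i) (fst (snd \<rho> ! i)) (snd (snd \<rho> ! i)))"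
  let ?n = "length (snd \<rho>)"
  have "(\<Prod>i<Suc ?n. ?f (frun_snoc \<rho> a q') i) =
        (\<Prod>i<?n. ?f (frun_snoc \<rho> a q') i) * ?f (frun_snoc \<rho> a q') ?n"
    by simp
  also have "(\<Prod>i<?n. ?f (frun_snoc \<rho> a q') i) = (\<Prod>i<?n. ?f \<rho> i)"
    by (intro prod.cong refl) (simp add: state_before_frun_snoc nth_append)
  also have "?f (frun_snoc \<rho> a q') ?n = \<sigma> \<rho> a * of_rat (d (last_state \<rho>) a q')"
    by (simp add: state_before_frun_snoc last_state_def)
  finally show ?thesis by (simp add: cyl_prob_def)
qed

lemma lk_frun_snoc:
  "lk E \<delta> b (frun_snoc \<rho> a q') = bel_upd E \<delta> (lk E \<delta> b \<rho>) (last_state \<rho>) a q'"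
proof -
  have "lk_aux E \<delta> b q (ps @ [(a, q')]) =
        bel_upd E \<delta> (lk_aux E \<delta> b q ps) (if ps = [] then q else snd (last ps)) a q'" for b q ps
    by (induction ps arbitrary: b q) auto
  then show ?thesis by (simp add: lk_def frun_snoc_def last_state_eq)
qed

definition step_count :: "(nat \<Rightarrow> nat \<Rightarrow> bool) \<Rightarrow> frun \<Rightarrow> nat" where
  "step_count P \<rho> = card {i. i < length (snd \<rho>) \<and> P (state_before \<rho> i) (fst (snd \<rho> ! i))}"

lemma step_count_Nil [simp]: "step_count P (q0, []) = 0"
  by (simp add: step_count_def)

lemma step_count_frun_snoc:
  "step_count P (frun_snoc \<rho> a q') = step_count P \<rho> + (if P (last_state \<rho>) a then 1 else 0)"
proof -
  let ?S = "{i. i < length (snd \<rho>) \<and> P (state_before \<rho> i) (fst (snd \<rho> ! i))}"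
  have "{i. i < length (snd (frun_snoc \<rho> a q')) \<and>
            P (state_before (frun_snoc \<rho> a q') i) (fst (snd (frun_snoc \<rho> a q') ! i))}
      = ?S \<union> (if P (last_state \<rho>) a then {length (snd \<rho>)} else {})"
    by (auto simp: state_before_frun_snoc nth_append last_state_def less_Suc_eq)
  then show ?thesis by (simp add: step_count_def card_insert_if)
qed

definition fruns :: "nat set \<Rightarrow> nat set \<Rightarrow> nat \<Rightarrow> frun set" where
  "fruns Q A n = {\<rho>. is_frun Q A \<rho> \<and> length (snd \<rho>) = n}"

lemma fruns_0: "fruns Q A 0 = (\<lambda>q0. (q0, [])) ` Q"
  by (auto simp: fruns_def is_frun_def)

lemma fruns_Suc: "fruns Q A (Suc n) = (\<lambda>(\<rho>, a, q'). frun_snoc \<rho> a q') ` (fruns Q A n \<times> A \<times> Q)"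
proof (intro set_eqI iffI)
  fix \<rho> assume \<rho>: "\<rho> \<in> fruns Q A (Suc n)"
  then obtain q0 ps a q' where eq: "\<rho> = frun_snoc (q0, ps) a q'" and "length ps = n"
    by (cases \<rho>) (auto simp: fruns_def frun_snoc_def length_Suc_conv_rev)
  with \<rho> have "((q0, ps), a, q') \<in> fruns Q A n \<times> A \<times> Q"
    by (simp add: fruns_def)
  then show "\<rho> \<in> (\<lambda>(\<rho>, a, q'). frun_snoc \<rho> a q') ` (fruns Q A n \<times> A \<times> Q)"
    unfolding eq by (rule rev_image_eqI) simp
qed (auto simp: fruns_def)

lemma finite_fruns: "finite Q \<Longrightarrow> finite A \<Longrightarrow> finite (fruns Q A n)"
  by (induction n) (simp_all add: fruns_0 fruns_Suc)

lemma sum_fruns_Suc: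
  assumes "finite Q" "finite A"
  shows "sum g (fruns Q A (Suc n)) = (\<Sum>\<rho>\<in>fruns Q A n. \<Sum>a\<in>A. \<Sum>q'\<in>Q. g (frun_snoc \<rho> a q'))"
proof -
  have "inj_on (\<lambda>(\<rho>, a, q'). frun_snoc \<rho> a q') (fruns Q A n \<times> A \<times> Q)"
    by (auto simp: inj_on_def frun_snoc_def prod_eq_iff)
  then show ?thesis
    using assms by (simp add: fruns_Suc sum.reindex sum.cartesian_product case_prod_beta' finite_fruns)
qed

lemma is_MEMDP_finite:
  assumes "is_MEMDP Q A E \<delta>"
  shows "finite Q" "finite A" "finite E"
  using assms by (simp_all add: is_MEMDP_def)

lemma is_MEMDP_transition:
  assumes "is_MEMDP Q A E \<delta>" "e \<in> E" "s \<in> Q" "a \<in> A"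
  shows "is_distr Q (\<lambda>q'. of_rat (\<delta> e s a q'))"
  using assms by (simp add: is_MEMDP_def)

lemma is_distr_finite: "is_distr X p \<Longrightarrow> finite X"
  by (metis is_distr_def sum.infinite zero_neq_one)

lemma is_distr_le_1:
  assumes "is_distr X p"
  shows "p x \<le> 1"
proof (cases "x \<in> X")
  case True
  with assms is_distr_finite[OF assms] show ?thesis by (metis is_distr_def member_le_sum)
qed (use assms in \<open>simp add: is_distr_def\<close>)

lemma is_strategy_distr: "is_strategy Q A \<sigma> \<Longrightarrow> is_frun Q A \<rho> \<Longrightarrow> is_distr A (\<sigma> \<rho>)"
  unfolding is_strategy_def by blast

lemma cyl_prob_nonneg:
  assumes memdp: "is_MEMDP Q A E \<delta>" and "e \<in> E" and strat: "is_strategy Q A \<sigma>"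
  shows "is_frun Q A \<rho> \<Longrightarrow> 0 \<le> cyl_prob (\<delta> e) \<sigma> q \<rho>"
proof (induction \<rho> rule: frun_snoc_induct)
  case (snoc \<rho> a q')
  then have "is_frun Q A \<rho>" "a \<in> A" by simp_all
  then have "0 \<le> \<sigma> \<rho> a" "0 \<le> (of_rat (\<delta> e (last_state \<rho>) a q') :: real)"
    using is_strategy_distr[OF strat] is_MEMDP_transition[OF memdp \<open>e \<in> E\<close> last_state_in]
    by (auto simp: is_distr_def)
  with snoc show ?case by (simp add: cyl_prob_frun_snoc)
qed (simp add: cyl_prob_Nil)

lemma cyl_prob_not_frun:
  assumes memdp: "is_MEMDP Q A E \<delta>" and "e \<in> E" "q \<in> Q" and strat: "is_strategy Q A \<sigma>"
  shows "\<not> is_frun Q A \<rho> \<Longrightarrow> cyl_prob (\<delta> e) \<sigma> q \<rho> = 0"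
proof (induction \<rho> rule: frun_snoc_induct)
  case (Nil q0)
  with \<open>q \<in> Q\<close> show ?case by (auto simp: cyl_prob_Nil is_frun_def)
next
  case (snoc \<rho> a q')
  consider "\<not> is_frun Q A \<rho>" | "is_frun Q A \<rho>" "a \<notin> A" | "is_frun Q A \<rho>" "a \<in> A" "q' \<notin> Q"
    using snoc.prems by auto
  then show ?case
  proof cases
    case 2
    then have "\<sigma> \<rho> a = 0" using is_strategy_distr[OF strat] by (simp add: is_distr_def)
    then show ?thesis by (simp add: cyl_prob_frun_snoc)
  next
    case 3
    then have "\<delta> e (last_state \<rho>) a q' = 0"
      using is_MEMDP_transition[OF memdp \<open>e \<in> E\<close> last_state_in] by (simp add: is_distr_def)
    then show ?thesis by (simp add: cyl_prob_frun_snoc)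
  qed (simp add: snoc.IH cyl_prob_frun_snoc)
qed

lemma bel_upd_nonneg:
  assumes "is_MEMDP Q A E \<delta>" "s \<in> Q" "a \<in> A" "\<forall>x\<in>E. 0 \<le> \<beta> x" "x \<in> E"
  shows "0 \<le> bel_upd E \<delta> \<beta> s a q' x"
  using assms is_MEMDP_transition[OF assms(1) assms(5) assms(2,3)]
  by (simp add: bel_upd_def is_distr_def)

lemma sum_bel_upd:
  assumes "sum \<beta> E = 1"
  shows "sum (bel_upd E \<delta> \<beta> s a q') E = 1"
  using assms by (simp add: bel_upd_def bel_p_def flip: sum_divide_distrib)

lemma sum_lk:
  assumes "sum b E = 1"
  shows "sum (lk E \<delta> b \<rho>) E = 1"
  by (induction \<rho> rule: frun_snoc_induct) (simp_all add: lk_frun_snoc sum_bel_upd, simp add: lk_def assms)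

definition never_small_belief_frun ::
  "nat set \<Rightarrow> (nat \<Rightarrow> nat \<Rightarrow> nat \<Rightarrow> nat \<Rightarrow> rat) \<Rightarrow> (nat \<Rightarrow> real) \<Rightarrow> real \<Rightarrow> frun \<Rightarrow> bool" where
  "never_small_belief_frun E \<delta> b \<epsilon> \<rho> \<longleftrightarrow>
     (\<forall>n \<le> length (snd \<rho>). \<forall>e'\<in>E. \<epsilon> < lk E \<delta> b (fst \<rho>, take n (snd \<rho>)) e')"

lemma never_small_belief_frun_Nil:
  "never_small_belief_frun E \<delta> b \<epsilon> (q0, []) \<longleftrightarrow> (\<forall>e'\<in>E. \<epsilon> < b e')"
  by (simp add: never_small_belief_frun_def lk_def)

lemma never_small_belief_frun_snoc:
  "never_small_belief_frun E \<delta> b \<epsilon> (frun_snoc \<rho> a q') \<longleftrightarrow>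
     never_small_belief_frun E \<delta> b \<epsilon> \<rho> \<and> (\<forall>e'\<in>E. \<epsilon> < lk E \<delta> b (frun_snoc \<rho> a q') e')"
  by (auto simp: never_small_belief_frun_def le_Suc_eq frun_snoc_def)

lemma never_small_belief_frun_lk:
  "never_small_belief_frun E \<delta> b \<epsilon> \<rho> \<Longrightarrow> e' \<in> E \<Longrightarrow> \<epsilon> < lk E \<delta> b \<rho> e'"
  unfolding never_small_belief_frun_def by (metis le_refl prod.collapse take_all)

section \<open>The Bhattacharyya coefficient of distinguishing transitions\<close>

definition bhattacharyya :: "nat set \<Rightarrow> (nat \<Rightarrow> real) \<Rightarrow> (nat \<Rightarrow> real) \<Rightarrow> real" where
  "bhattacharyya X p r = (\<Sum>x\<in>X. sqrt (p x * r x))"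

lemma bhattacharyya_self: "is_distr X p \<Longrightarrow> bhattacharyya X p p = 1"
  by (simp add: bhattacharyya_def is_distr_def)

text \<open>The gap at one point bounds the squared Hellinger distance
  \<open>\<Sum>x. (sqrt (p x) - sqrt (r x))\<^sup>2 = 2 - 2 * bhattacharyya X p r\<close> from below.\<close>

lemma bhattacharyya_le_of_gap:
  assumes p: "is_distr X p" and r: "is_distr X r" and "j \<in> X" "0 \<le> \<eta>" "\<eta> \<le> \<bar>p j - r j\<bar>"
  shows "bhattacharyya X p r \<le> 1 - \<eta>\<^sup>2 / 8"
proof -
  have nn: "0 \<le> p x" "0 \<le> r x" for x using p r by (simp_all add: is_distr_def)
  have "(\<Sum>x\<in>X. (sqrt (p x) - sqrt (r x))\<^sup>2) = 2 - 2 * bhattacharyya X p r"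
    using p r nn by (simp add: bhattacharyya_def is_distr_def power2_diff real_sqrt_mult
        sum.distrib sum_subtractf sum_distrib_left mult.assoc)
  moreover have "(sqrt (p j) - sqrt (r j))\<^sup>2 \<le> (\<Sum>x\<in>X. (sqrt (p x) - sqrt (r x))\<^sup>2)"
    using is_distr_finite[OF p] \<open>j \<in> X\<close> by (intro member_le_sum) auto
  moreover have "\<eta> \<le> 2 * \<bar>sqrt (p j) - sqrt (r j)\<bar>"
  proof -
    have "p j - r j = (sqrt (p j) - sqrt (r j)) * (sqrt (p j) + sqrt (r j))"
      using nn by (simp add: algebra_simps)
    then have "\<bar>p j - r j\<bar> = \<bar>sqrt (p j) - sqrt (r j)\<bar> * (sqrt (p j) + sqrt (r j))"
      using nn by (simp add: abs_mult)
    also have "\<dots> \<le> \<bar>sqrt (p j) - sqrt (r j)\<bar> * 2"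
    proof -
      have "sqrt (p j) \<le> 1" "sqrt (r j) \<le> 1"
        using is_distr_le_1[OF p, of j] is_distr_le_1[OF r, of j] by simp_all
      then show ?thesis by (intro mult_left_mono) (linarith, simp)
    qed
    finally show ?thesis using assms(5) by simp
  qed
  then have "\<eta>\<^sup>2 \<le> 4 * (sqrt (p j) - sqrt (r j))\<^sup>2"
    using assms(4) power_mono[of \<eta> "2 * \<bar>sqrt (p j) - sqrt (r j)\<bar>" 2]
    by (simp add: power_mult_distrib)
  ultimately show ?thesis by linarith
qed

lemma less_power_bitlen: "n < 2 ^ bitlen n"
proof (induction n rule: bitlen.induct)
  case (1 n)
  show ?case
  proof (cases "n < 2")
    case False
    with "1.IH" have "n div 2 < 2 ^ bitlen (n div 2)" by simp
    with False show ?thesis by (subst bitlen.simps) simp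
  qed (subst bitlen.simps, simp)
qed

lemma bitlen_pos: "0 < bitlen n"
  by (subst bitlen.simps) simp

lemma quotient_of_denom_less:
  assumes "rat_bits r \<le> l" "quotient_of r = (p, d)"
  shows "d < 2 ^ l"
proof -
  have "bitlen (nat d) \<le> l"
    using assms bitlen_pos[of "nat \<bar>p\<bar>"] by (simp add: rat_bits_def)
  then have "nat d < 2 ^ l"
    using less_power_bitlen[of "nat d"] by (meson less_le_trans one_le_numeral power_increasing)
  then show ?thesis
    using quotient_of_denom_pos[OF assms(2)] by (simp add: nat_less_iff)
qed

lemma of_rat_dist_ge:
  assumes "rat_bits r1 \<le> l" "rat_bits r2 \<le> l" "r1 \<noteq> r2"
  shows "1 / 4 ^ l \<le> \<bar>(of_rat r1 :: real) - of_rat r2\<bar>"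
proof -
  obtain p1 d1 p2 d2 where q1: "quotient_of r1 = (p1, d1)" and q2: "quotient_of r2 = (p2, d2)"
    by (meson surj_pair)
  have d1: "0 < d1" "d1 < 2 ^ l" and d2: "0 < d2" "d2 < 2 ^ l"
    using quotient_of_denom_pos[OF q1] quotient_of_denom_pos[OF q2]
      quotient_of_denom_less[OF assms(1) q1] quotient_of_denom_less[OF assms(2) q2] by auto
  have "p1 * d2 \<noteq> p2 * d1"
    using assms(3) d1 d2 quotient_of_div[OF q1] quotient_of_div[OF q2]
    by (simp add: frac_eq_eq flip: of_int_mult)
  then have num: "1 \<le> \<bar>real_of_int (p1 * d2 - p2 * d1)\<bar>" by linarith
  have den: "real_of_int (d1 * d2) \<le> 4 ^ l"
  proof -
    have "d1 * d2 \<le> 2 ^ l * 2 ^ l" using d1 d2 by (intro mult_mono) auto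
    then have "d1 * d2 \<le> 4 ^ l" by (simp flip: power_mult_distrib)
    then show ?thesis by (metis of_int_le_iff of_int_numeral of_int_power)
  qed
  have "1 / 4 ^ l \<le> 1 / real_of_int (d1 * d2)"
    using den d1 d2 by (intro divide_left_mono) auto
  also have "\<dots> \<le> \<bar>real_of_int (p1 * d2 - p2 * d1)\<bar> / real_of_int (d1 * d2)"
    using num d1 d2 by (intro divide_right_mono) auto
  also have "\<dots> = \<bar>(of_rat r1 :: real) - of_rat r2\<bar>"
  proof -
    have "(of_rat r1 :: real) = p1 / d1" "(of_rat r2 :: real) = p2 / d2"
      using quotient_of_div[OF q1] quotient_of_div[OF q2] by (simp_all add: of_rat_divide)
    then have "(of_rat r1 :: real) - of_rat r2 = real_of_int (p1 * d2 - p2 * d1) / real_of_int (d1 * d2)"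
      using d1 d2 by (simp add: diff_frac_eq)
    then show ?thesis using d1 d2 by (simp add: abs_divide)
  qed
  finally show ?thesis .
qed

lemma rat_bits_le_max_bits:
  assumes "is_MEMDP Q A E \<delta>" "e \<in> E" "s \<in> Q" "a \<in> A" "q' \<in> Q"
  shows "rat_bits (\<delta> e s a q') \<le> max_bits Q A E \<delta>"
proof -
  have "{rat_bits (\<delta> e q a q') | e q a q'. e \<in> E \<and> q \<in> Q \<and> a \<in> A \<and> q' \<in> Q}
      \<subseteq> (\<lambda>(e, q, a, q'). rat_bits (\<delta> e q a q')) ` (E \<times> Q \<times> A \<times> Q)"
  proof clarify
    fix e q a q' assume "e \<in> E" "q \<in> Q" "a \<in> A" "q' \<in> Q"
    then show "rat_bits (\<delta> e q a q') \<in> (\<lambda>(e, q, a, q'). rat_bits (\<delta> e q a q')) ` (E \<times> Q \<times> A \<times> Q)"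
      by (intro image_eqI[of _ _ "(e, q, a, q')"]) auto
  qed
  moreover have "finite ((\<lambda>(e, q, a, q'). rat_bits (\<delta> e q a q')) ` (E \<times> Q \<times> A \<times> Q))"
    using is_MEMDP_finite[OF assms(1)] by simp
  ultimately have "finite {rat_bits (\<delta> e q a q') | e q a q'. e \<in> E \<and> q \<in> Q \<and> a \<in> A \<and> q' \<in> Q}"
    by (rule finite_subset)
  then show ?thesis
    unfolding max_bits_def by (rule Max_ge) (use assms in blast)
qed

lemma bhattacharyya_distinguishing_le:
  assumes memdp: "is_MEMDP Q A E \<delta>" and "e \<in> E" "e' \<in> E" "s \<in> Q" "a \<in> A"
    and "\<delta> e s a \<noteq> \<delta> e' s a"
  shows "bhattacharyya Q (\<lambda>q'. of_rat (\<delta> e s a q')) (\<lambda>q'. of_rat (\<delta> e' s a q'))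
           \<le> 1 - 1 / (8 * (2 ^ max_bits Q A E \<delta>) ^ 4)"
proof -
  let ?l = "max_bits Q A E \<delta>"
  obtain q' where q': "\<delta> e s a q' \<noteq> \<delta> e' s a q'" using assms(6) by auto
  have distr: "is_distr Q (\<lambda>q'. of_rat (\<delta> e s a q'))" "is_distr Q (\<lambda>q'. of_rat (\<delta> e' s a q'))"
    using is_MEMDP_transition assms by blast+
  have "q' \<in> Q"
  proof (rule ccontr)
    assume "q' \<notin> Q"
    with distr q' show False by (simp add: is_distr_def)
  qed
  then have "1 / 4 ^ ?l \<le> \<bar>(of_rat (\<delta> e s a q') :: real) - of_rat (\<delta> e' s a q')\<bar>"
    using assms q' by (intro of_rat_dist_ge rat_bits_le_max_bits)
  then have "bhattacharyya Q (\<lambda>q'. of_rat (\<delta> e s a q')) (\<lambda>q'. of_rat (\<delta> e' s a q'))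
               \<le> 1 - (1 / 4 ^ ?l)\<^sup>2 / 8"
    using distr \<open>q' \<in> Q\<close> by (intro bhattacharyya_le_of_gap) auto
  also have "(1 / 4 ^ ?l)\<^sup>2 / 8 = 1 / (8 * (2 ^ ?l) ^ 4 :: real)"
  proof -
    have "(4::real) ^ ?l = (2 ^ ?l)\<^sup>2"
      by (simp add: power2_eq_square flip: power_mult_distrib)
    then show ?thesis by (simp add: power_one_over flip: power_mult)
  qed
  finally show ?thesis .
qed

section \<open>A supermartingale on finite runs\<close>

definition belief_potential :: "nat set \<Rightarrow> nat \<Rightarrow> real \<Rightarrow> (nat \<Rightarrow> real) \<Rightarrow> (nat \<Rightarrow> nat) \<Rightarrow> real" where
  "belief_potential E e c \<beta> N = (\<Sum>e'\<in>E - {e}. sqrt (\<beta> e' / \<beta> e) * (1 / c) ^ N e')"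

lemma belief_potential_nonneg:
  "\<forall>x\<in>E. 0 \<le> \<beta> x \<Longrightarrow> e \<in> E \<Longrightarrow> 0 < c \<Longrightarrow> 0 \<le> belief_potential E e c \<beta> N"
  unfolding belief_potential_def by (intro sum_nonneg mult_nonneg_nonneg) auto

text \<open>Summed over \<open>q'\<close>, the right-hand side is \<open>sqrt (\<beta> e' / \<beta> e)\<close> times the
  Bhattacharyya coefficient of the two transition distributions.\<close>

lemma sqrt_bel_upd_ratio:
  assumes memdp: "is_MEMDP Q A E \<delta>" and "e \<in> E" "s \<in> Q" "a \<in> A" and pos: "\<forall>x\<in>E. 0 < \<beta> x"
  shows "of_rat (\<delta> e s a q') * sqrt (bel_upd E \<delta> \<beta> s a q' e' / bel_upd E \<delta> \<beta> s a q' e)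
       = sqrt (\<beta> e' / \<beta> e) * sqrt (of_rat (\<delta> e s a q') * of_rat (\<delta> e' s a q'))"
proof (cases "\<delta> e s a q' = 0")
  case False
  let ?d = "\<lambda>x. (of_rat (\<delta> x s a q') :: real)"
  have nn: "\<forall>x\<in>E. 0 \<le> ?d x"
    using is_MEMDP_transition[OF memdp _ \<open>s \<in> Q\<close> \<open>a \<in> A\<close>] by (simp add: is_distr_def)
  with False \<open>e \<in> E\<close> have de: "0 < ?d e" by force
  have "\<beta> e * ?d e \<le> bel_p E \<delta> \<beta> s a q'"
    unfolding bel_p_def using is_MEMDP_finite[OF memdp] \<open>e \<in> E\<close> pos nn
    by (intro member_le_sum) (auto intro: less_imp_le)
  moreover have "0 < \<beta> e * ?d e" using de pos \<open>e \<in> E\<close> by simp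
  ultimately have "0 < bel_p E \<delta> \<beta> s a q'" by linarith
  then have "bel_upd E \<delta> \<beta> s a q' e' / bel_upd E \<delta> \<beta> s a q' e = (\<beta> e' / \<beta> e) * (?d e' / ?d e)"
    using de pos \<open>e \<in> E\<close> by (simp add: bel_upd_def field_simps)
  moreover have "?d e * sqrt (?d e' / ?d e) = sqrt (?d e * ?d e')"
  proof -
    have "?d e * ?d e' = (?d e)\<^sup>2 * (?d e' / ?d e)" using de by (simp add: power2_eq_square)
    then have "sqrt (?d e * ?d e') = \<bar>?d e\<bar> * sqrt (?d e' / ?d e)"
      by (simp only: real_sqrt_mult real_sqrt_abs)
    with de show ?thesis by simp
  qed
  ultimately show ?thesis
    by (simp only: real_sqrt_mult times_divide_eq_right[symmetric] mult.left_commute[of "?d e"])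
qed simp

lemma belief_potential_step:
  assumes memdp: "is_MEMDP Q A E \<delta>" and eE: "e \<in> E" and sQ: "s \<in> Q" and aA: "a \<in> A"
    and pos: "\<forall>x\<in>E. 0 < \<beta> x" and c0: "0 < c"
    and bc: "\<forall>e'\<in>E. \<delta> e s a \<noteq> \<delta> e' s a \<longrightarrow>
       bhattacharyya Q (\<lambda>q'. of_rat (\<delta> e s a q')) (\<lambda>q'. of_rat (\<delta> e' s a q')) \<le> c"
  shows "(\<Sum>q'\<in>Q. of_rat (\<delta> e s a q') * belief_potential E e c (bel_upd E \<delta> \<beta> s a q')
            (\<lambda>e'. N e' + (if \<delta> e s a \<noteq> \<delta> e' s a then 1 else 0))) \<le> belief_potential E e c \<beta> N"
proof -
  let ?d = "\<lambda>x q'. (of_rat (\<delta> x s a q') :: real)"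
  let ?D = "\<lambda>e'. (if \<delta> e s a \<noteq> \<delta> e' s a then 1 else 0) :: nat"
  let ?B = "\<lambda>e'. bhattacharyya Q (?d e) (?d e')"
  have "(\<Sum>q'\<in>Q. ?d e q' * belief_potential E e c (bel_upd E \<delta> \<beta> s a q') (\<lambda>e'. N e' + ?D e'))
      = (\<Sum>q'\<in>Q. \<Sum>e'\<in>E - {e}. (1 / c) ^ (N e' + ?D e') *
           (?d e q' * sqrt (bel_upd E \<delta> \<beta> s a q' e' / bel_upd E \<delta> \<beta> s a q' e)))"
    unfolding belief_potential_def sum_distrib_left by (intro sum.cong refl) (simp add: mult_ac)
  also have "\<dots> = (\<Sum>q'\<in>Q. \<Sum>e'\<in>E - {e}. (1 / c) ^ (N e' + ?D e') *
           (sqrt (\<beta> e' / \<beta> e) * sqrt (?d e q' * ?d e' q')))"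
    by (simp only: sqrt_bel_upd_ratio[OF memdp eE sQ aA pos])
  also have "\<dots> = (\<Sum>e'\<in>E - {e}. (1 / c) ^ N e' * sqrt (\<beta> e' / \<beta> e) * ((1 / c) ^ ?D e' * ?B e'))"
    unfolding bhattacharyya_def
    by (subst sum.swap, intro sum.cong refl) (simp add: sum_distrib_left power_add mult_ac)
  also have "\<dots> \<le> (\<Sum>e'\<in>E - {e}. (1 / c) ^ N e' * sqrt (\<beta> e' / \<beta> e) * 1)"
  proof (intro sum_mono mult_left_mono)
    fix e' assume e': "e' \<in> E - {e}"
    have "0 < \<beta> e'" "0 < \<beta> e" using pos e' eE by auto
    then show "0 \<le> (1 / c) ^ N e' * sqrt (\<beta> e' / \<beta> e)" using c0 by simp
    show "(1 / c) ^ ?D e' * ?B e' \<le> 1"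
    proof (cases "\<delta> e s a = \<delta> e' s a")
      case True
      then show ?thesis
        using bhattacharyya_self[OF is_MEMDP_transition[OF memdp eE sQ aA]] by simp
    next
      case False
      then show ?thesis using bc e' c0 by (simp add: field_simps)
    qed
  qed
  also have "\<dots> = belief_potential E e c \<beta> N"
    unfolding belief_potential_def by (simp add: mult_ac)
  finally show ?thesis .
qed

locale belief_supermartingale =
  fixes Q A E :: "nat set" and \<delta> :: "nat \<Rightarrow> nat \<Rightarrow> nat \<Rightarrow> nat \<Rightarrow> rat" and b :: "nat \<Rightarrow> real"
    and q :: nat and \<sigma> :: "frun \<Rightarrow> nat \<Rightarrow> real" and e :: nat and \<epsilon> c :: real
  assumes memdp: "is_MEMDP Q A E \<delta>" and distr_b: "is_distr E b" and qQ: "q \<in> Q"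
    and strat: "is_strategy Q A \<sigma>" and eE: "e \<in> E" and eps_pos: "0 < \<epsilon>"
    and c_pos: "0 < c" and c_le_1: "c \<le> 1"
    and distinguishing_bhattacharyya_le: "\<forall>s\<in>Q. \<forall>a\<in>A. \<forall>e'\<in>E. \<delta> e s a \<noteq> \<delta> e' s a \<longrightarrow>
       bhattacharyya Q (\<lambda>q'. of_rat (\<delta> e s a q')) (\<lambda>q'. of_rat (\<delta> e' s a q')) \<le> c"
begin

abbreviation run_prob :: "frun \<Rightarrow> real" where
  "run_prob \<equiv> cyl_prob (\<delta> e) \<sigma> q"

abbreviation nsb :: "frun \<Rightarrow> bool" where
  "nsb \<equiv> never_small_belief_frun E \<delta> b \<epsilon>"

definition potential :: "frun \<Rightarrow> real" where
  "potential \<rho> = belief_potential E e c (lk E \<delta> b \<rho>)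
                   (\<lambda>e'. step_count (\<lambda>s a. \<delta> e s a \<noteq> \<delta> e' s a) \<rho>)"

definition weight :: "frun \<Rightarrow> real" where
  "weight \<rho> = (if nsb \<rho> then run_prob \<rho> * potential \<rho> else 0)"

lemma lk_pos: "nsb \<rho> \<Longrightarrow> \<forall>x\<in>E. 0 < lk E \<delta> b \<rho> x"
  using never_small_belief_frun_lk eps_pos by fastforce

lemma weight_nonneg: "is_frun Q A \<rho> \<Longrightarrow> 0 \<le> weight \<rho>"
  using cyl_prob_nonneg[OF memdp eE strat] belief_potential_nonneg[OF _ eE c_pos] lk_pos
  by (auto simp: weight_def potential_def less_imp_le)

lemma potential_frun_snoc:
  "potential (frun_snoc \<rho> a q') =
     belief_potential E e c (bel_upd E \<delta> (lk E \<delta> b \<rho>) (last_state \<rho>) a q')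
       (\<lambda>e'. step_count (\<lambda>s a. \<delta> e s a \<noteq> \<delta> e' s a) \<rho> +
              (if \<delta> e (last_state \<rho>) a \<noteq> \<delta> e' (last_state \<rho>) a then 1 else 0))"
  by (simp add: potential_def lk_frun_snoc step_count_frun_snoc)

lemma sum_potential_frun_snoc_le:
  assumes "is_frun Q A \<rho>" "nsb \<rho>" "a \<in> A"
  shows "(\<Sum>q'\<in>Q. of_rat (\<delta> e (last_state \<rho>) a q') * potential (frun_snoc \<rho> a q')) \<le> potential \<rho>"
  unfolding potential_frun_snoc unfolding potential_def
  using distinguishing_bhattacharyya_le last_state_in[OF assms(1)] assms(3)
  by (intro belief_potential_step[OF memdp eE last_state_in[OF assms(1)] assms(3) lk_pos[OF assms(2)] c_pos])
    auto

lemma weight_frun_snoc_le: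
  assumes fr: "is_frun Q A \<rho>" and "nsb \<rho>" "a \<in> A"
  shows "weight (frun_snoc \<rho> a q') \<le>
           run_prob \<rho> * (\<sigma> \<rho> a * (of_rat (\<delta> e (last_state \<rho>) a q') * potential (frun_snoc \<rho> a q')))"
proof -
  have "0 \<le> (of_rat (\<delta> e (last_state \<rho>) a q') :: real)"
    using is_MEMDP_transition[OF memdp eE last_state_in[OF fr] \<open>a \<in> A\<close>] by (simp add: is_distr_def)
  moreover have "\<forall>x\<in>E. 0 \<le> bel_upd E \<delta> (lk E \<delta> b \<rho>) (last_state \<rho>) a q' x"
    using bel_upd_nonneg[OF memdp last_state_in[OF fr] \<open>a \<in> A\<close>] lk_pos[OF \<open>nsb \<rho>\<close>]
    by (simp add: less_imp_le)
  ultimately have "0 \<le> run_prob \<rho> * (\<sigma> \<rho> a * (of_rat (\<delta> e (last_state \<rho>) a q') * potential (frun_snoc \<rho> a q')))"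
    using cyl_prob_nonneg[OF memdp eE strat fr] is_strategy_distr[OF strat fr]
      belief_potential_nonneg[OF _ eE c_pos]
    by (simp add: potential_frun_snoc is_distr_def)
  then show ?thesis by (simp add: weight_def cyl_prob_frun_snoc mult_ac)
qed

lemma sum_weight_frun_snoc_le:
  assumes fr: "is_frun Q A \<rho>"
  shows "(\<Sum>a\<in>A. \<Sum>q'\<in>Q. weight (frun_snoc \<rho> a q')) \<le> weight \<rho>"
proof (cases "nsb \<rho>")
  case False
  then show ?thesis by (simp add: weight_def never_small_belief_frun_snoc)
next
  case True
  let ?d = "\<lambda>a q'. (of_rat (\<delta> e (last_state \<rho>) a q') :: real)"
  have \<sigma>: "is_distr A (\<sigma> \<rho>)" using is_strategy_distr[OF strat fr] .
  have "(\<Sum>a\<in>A. \<Sum>q'\<in>Q. weight (frun_snoc \<rho> a q'))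
      \<le> (\<Sum>a\<in>A. \<Sum>q'\<in>Q. run_prob \<rho> * (\<sigma> \<rho> a * (?d a q' * potential (frun_snoc \<rho> a q'))))"
    using weight_frun_snoc_le[OF fr True] by (intro sum_mono) auto
  also have "\<dots> = run_prob \<rho> * (\<Sum>a\<in>A. \<sigma> \<rho> a * (\<Sum>q'\<in>Q. ?d a q' * potential (frun_snoc \<rho> a q')))"
    by (simp add: sum_distrib_left)
  also have "\<dots> \<le> run_prob \<rho> * (\<Sum>a\<in>A. \<sigma> \<rho> a * potential \<rho>)"
    using sum_potential_frun_snoc_le[OF fr True] cyl_prob_nonneg[OF memdp eE strat fr] \<sigma>
    by (intro mult_left_mono sum_mono) (auto simp: is_distr_def)
  also have "\<dots> = weight \<rho>"
    using True \<sigma> by (simp add: weight_def is_distr_def flip: sum_distrib_right)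
  finally show ?thesis .
qed

lemma weight_Nil_le: "weight (q0, []) \<le> real (card E - 1) * sqrt (1 / \<epsilon>)"
proof (cases "q0 = q \<and> nsb (q0, [])")
  case True
  then have be: "\<epsilon> < b e" using eE by (simp add: never_small_belief_frun_Nil)
  have "weight (q0, []) = (\<Sum>e'\<in>E - {e}. sqrt (b e' / b e))"
    using True by (auto simp: weight_def cyl_prob_Nil potential_def belief_potential_def lk_def)
  also have "\<dots> \<le> (\<Sum>e'\<in>E - {e}. sqrt (1 / \<epsilon>))"
  proof (intro sum_mono real_sqrt_le_mono)
    fix e'
    have "0 \<le> b e'" "b e' \<le> 1" using distr_b is_distr_le_1 by (auto simp: is_distr_def)
    then show "b e' / b e \<le> 1 / \<epsilon>" using be eps_pos by (simp add: frac_le)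
  qed
  also have "\<dots> = real (card E - 1) * sqrt (1 / \<epsilon>)"
    using eE is_MEMDP_finite[OF memdp] by simp
  finally show ?thesis .
qed (use eps_pos in \<open>auto simp: weight_def cyl_prob_Nil\<close>)

lemma sum_weight_fruns_le: "sum weight (fruns Q A n) \<le> real (card E - 1) * sqrt (1 / \<epsilon>)"
proof (induction n)
  case 0
  have "sum weight (fruns Q A 0) = (\<Sum>q0\<in>Q. weight (q0, []))"
    by (simp add: fruns_0 sum.reindex inj_on_def)
  also have "\<dots> = (\<Sum>q0\<in>Q. if q0 = q then weight (q, []) else 0)"
    by (intro sum.cong) (auto simp: weight_def cyl_prob_Nil)
  also have "\<dots> \<le> real (card E - 1) * sqrt (1 / \<epsilon>)"
    using qQ is_MEMDP_finite[OF memdp] weight_Nil_le by simp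
  finally show ?case .
next
  case (Suc n)
  have "sum weight (fruns Q A (Suc n)) = (\<Sum>\<rho>\<in>fruns Q A n. \<Sum>a\<in>A. \<Sum>q'\<in>Q. weight (frun_snoc \<rho> a q'))"
    using is_MEMDP_finite[OF memdp] by (simp add: sum_fruns_Suc)
  also have "\<dots> \<le> sum weight (fruns Q A n)"
    by (intro sum_mono sum_weight_frun_snoc_le) (simp add: fruns_def)
  finally show ?case using Suc.IH by simp
qed

lemma run_prob_mult_le_weight:
  assumes "is_frun Q A \<rho>" "nsb \<rho>" "e' \<in> E - {e}"
    and "J \<le> step_count (\<lambda>s a. \<delta> e s a \<noteq> \<delta> e' s a) \<rho>"
  shows "run_prob \<rho> * (sqrt \<epsilon> * (1 / c) ^ J) \<le> weight \<rho>"
proof -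
  let ?\<beta> = "lk E \<delta> b \<rho>" and ?N = "step_count (\<lambda>s a. \<delta> e s a \<noteq> \<delta> e' s a) \<rho>"
  have pos: "\<forall>x\<in>E. 0 < ?\<beta> x" using lk_pos[OF assms(2)] .
  have "?\<beta> e \<le> sum ?\<beta> E"
    using pos eE is_MEMDP_finite[OF memdp] by (intro member_le_sum) (auto intro: less_imp_le)
  then have "\<epsilon> * ?\<beta> e \<le> \<epsilon>"
    using sum_lk distr_b eps_pos by (simp add: is_distr_def mult_left_le)
  moreover have "\<epsilon> < ?\<beta> e'" using never_small_belief_frun_lk[OF assms(2)] assms(3) by auto
  ultimately have "sqrt \<epsilon> \<le> sqrt (?\<beta> e' / ?\<beta> e)"
    using pos eE by (simp add: le_divide_eq)
  moreover have "(1 / c) ^ J \<le> (1 / c) ^ ?N"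
    using assms(4) c_pos c_le_1 by (intro power_increasing) auto
  ultimately have "sqrt \<epsilon> * (1 / c) ^ J \<le> sqrt (?\<beta> e' / ?\<beta> e) * (1 / c) ^ ?N"
    using c_pos eps_pos by (intro mult_mono) auto
  also have "\<dots> \<le> potential \<rho>"
    unfolding potential_def belief_potential_def
    using assms(3) pos eE c_pos is_MEMDP_finite[OF memdp]
    by (intro member_le_sum[of e' "E - {e}"]) (auto intro!: mult_nonneg_nonneg less_imp_le)
  finally show ?thesis
    using assms(1,2) cyl_prob_nonneg[OF memdp eE strat] by (simp add: weight_def mult_left_mono)
qed

lemma sum_run_prob_le:
  assumes R: "R \<subseteq> fruns Q A N"
    and distinguished: "\<And>\<rho>. \<rho> \<in> R \<Longrightarrow>
          nsb \<rho> \<and> (\<exists>e'\<in>E - {e}. J \<le> step_count (\<lambda>s a. \<delta> e s a \<noteq> \<delta> e' s a) \<rho>)"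
  shows "sum run_prob R \<le> real (card E - 1) * c ^ J / \<epsilon>"
proof -
  let ?K = "sqrt \<epsilon> * (1 / c) ^ J"
  have "run_prob \<rho> * ?K \<le> weight \<rho>" if \<rho>: "\<rho> \<in> R" for \<rho>
  proof -
    obtain e' where "e' \<in> E - {e}" "J \<le> step_count (\<lambda>s a. \<delta> e s a \<noteq> \<delta> e' s a) \<rho>" "nsb \<rho>"
      using distinguished[OF \<rho>] by blast
    moreover have "is_frun Q A \<rho>" using R \<rho> by (auto simp: fruns_def)
    ultimately show ?thesis by (intro run_prob_mult_le_weight)
  qed
  then have "sum run_prob R * ?K \<le> sum weight R"
    unfolding sum_distrib_right by (rule sum_mono)
  also have "\<dots> \<le> sum weight (fruns Q A N)"
    using R finite_fruns is_MEMDP_finite[OF memdp] weight_nonneg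
    by (intro sum_mono2) (auto simp: fruns_def)
  also have "\<dots> \<le> real (card E - 1) * sqrt (1 / \<epsilon>)"
    by (rule sum_weight_fruns_le)
  finally have "sum run_prob R * ?K \<le> real (card E - 1) * sqrt (1 / \<epsilon>)" .
  moreover have "real (card E - 1) * sqrt (1 / \<epsilon>) / ?K = real (card E - 1) * c ^ J / \<epsilon>"
    using eps_pos c_pos by (simp add: real_sqrt_divide power_one_over field_simps)
  ultimately show ?thesis
    using eps_pos c_pos by (simp add: pos_le_divide_eq[symmetric])
qed

end

section \<open>From finite runs to the run measure\<close>

lemma cyl_in_sets:
  assumes "sets M = sets (stream_space (count_space UNIV))"
  shows "cyl \<rho> \<in> sets M"
proof -
  have "{\<omega> \<in> space (stream_space (count_space UNIV)). fst (\<omega> !! 0) = fst \<rho> \<and>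
       (\<forall>i < length (snd \<rho>). snd (\<omega> !! i) = fst (snd \<rho> ! i) \<and> fst (\<omega> !! Suc i) = snd (snd \<rho> ! i))}
      \<in> sets (stream_space (count_space (UNIV :: (nat \<times> nat) set)))"
    by measurable
  then show ?thesis using assms by (simp add: cyl_def space_stream_space streams_UNIV)
qed

lemma length_prefix_run [simp]: "length (snd (prefix_run \<omega> N)) = N"
  by (simp add: prefix_run_def)

lemma in_cyl_prefix_run: "\<omega> \<in> cyl (prefix_run \<omega> N)"
  by (simp add: cyl_def prefix_run_def)

lemma in_cyl_iff_prefix_run:
  assumes "length (snd \<rho>) = N"
  shows "\<omega> \<in> cyl \<rho> \<longleftrightarrow> \<rho> = prefix_run \<omega> N"
proof
  assume "\<omega> \<in> cyl \<rho>"
  then have "snd \<rho> = snd (prefix_run \<omega> N)" "fst \<rho> = fst (prefix_run \<omega> N)"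
    using assms by (auto intro!: nth_equalityI simp: cyl_def prefix_run_def prod_eq_iff simp del: snth.simps)
  then show "\<rho> = prefix_run \<omega> N" by (simp add: prod_eq_iff)
qed (simp add: in_cyl_prefix_run)

lemma take_prefix_run:
  "n \<le> N \<Longrightarrow> (fst (prefix_run \<omega> N), take n (snd (prefix_run \<omega> N))) = prefix_run \<omega> n"
  by (simp add: prefix_run_def take_map)

lemma step_count_prefix_run:
  "step_count P (prefix_run \<omega> N) = card {i. i < N \<and> P (fst (\<omega> !! i)) (snd (\<omega> !! i))}"
proof -
  have "state_before (prefix_run \<omega> N) i = fst (\<omega> !! i)" if "i \<le> N" for i
    using that by (cases i) (simp_all add: state_before_def prefix_run_def del: snth.simps)
  then show ?thesis
    unfolding step_count_def
    by (intro arg_cong[where f = card] Collect_cong) (auto simp: prefix_run_def simp del: snth.simps)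
qed

lemma prefix_run_event_eq:
  "{\<omega>. P (prefix_run \<omega> N)} = (\<Union>\<rho>\<in>{\<rho>. length (snd \<rho>) = N \<and> P \<rho>}. cyl \<rho>)"
proof (intro set_eqI iffI)
  fix \<omega> assume "\<omega> \<in> {\<omega>. P (prefix_run \<omega> N)}"
  then show "\<omega> \<in> (\<Union>\<rho>\<in>{\<rho>. length (snd \<rho>) = N \<and> P \<rho>}. cyl \<rho>)"
    using in_cyl_prefix_run[of \<omega> N] by (intro UN_I[of "prefix_run \<omega> N"]) auto
qed (auto simp: in_cyl_iff_prefix_run)

lemma prefix_run_event_in_sets:
  assumes "sets M = sets (stream_space (count_space UNIV))"
  shows "{\<omega>. P (prefix_run \<omega> N)} \<in> sets M"
  unfolding prefix_run_event_eq using cyl_in_sets[OF assms]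
  by (intro sets.countable_UN') (auto intro: countableI_type)

lemma measure_prefix_run_event_le:
  assumes memdp: "is_MEMDP Q A E \<delta>" and "e \<in> E" "q \<in> Q" and strat: "is_strategy Q A \<sigma>"
    and M: "is_run_measure (\<delta> e) \<sigma> q M"
  shows "measure M {\<omega>. P (prefix_run \<omega> N)} \<le> sum (cyl_prob (\<delta> e) \<sigma> q) {\<rho> \<in> fruns Q A N. P \<rho>}"
proof -
  interpret prob_space M using M by (simp add: is_run_measure_def)
  have sets: "cyl \<rho> \<in> sets M" for \<rho> using M cyl_in_sets by (simp add: is_run_measure_def)
  have mcyl: "measure M (cyl \<rho>) = cyl_prob (\<delta> e) \<sigma> q \<rho>" for \<rho>
    using M unfolding is_run_measure_def by blast
  let ?R = "{\<rho> \<in> fruns Q A N. P \<rho>}"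
  have finR: "finite ?R" using finite_fruns[of Q A N] is_MEMDP_finite[OF memdp] by simp
  have null: "(\<Union>\<rho>\<in>{\<rho>. \<not> is_frun Q A \<rho>}. cyl \<rho>) \<in> null_sets M"
    using sets cyl_prob_not_frun[OF memdp assms(2,3) strat]
    by (intro null_sets_UN') (auto simp: mcyl emeasure_eq_measure intro: countableI_type)
  have "{\<omega>. P (prefix_run \<omega> N)} \<subseteq> (\<Union>\<rho>\<in>?R. cyl \<rho>) \<union> (\<Union>\<rho>\<in>{\<rho>. \<not> is_frun Q A \<rho>}. cyl \<rho>)"
  proof
    fix \<omega> assume "\<omega> \<in> {\<omega>. P (prefix_run \<omega> N)}"
    then have "prefix_run \<omega> N \<in> ?R \<or> prefix_run \<omega> N \<in> {\<rho>. \<not> is_frun Q A \<rho>}"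
      by (auto simp: fruns_def)
    then show "\<omega> \<in> (\<Union>\<rho>\<in>?R. cyl \<rho>) \<union> (\<Union>\<rho>\<in>{\<rho>. \<not> is_frun Q A \<rho>}. cyl \<rho>)"
      using in_cyl_prefix_run[of \<omega> N] by blast
  qed
  then have "measure M {\<omega>. P (prefix_run \<omega> N)}
      \<le> measure M ((\<Union>\<rho>\<in>?R. cyl \<rho>) \<union> (\<Union>\<rho>\<in>{\<rho>. \<not> is_frun Q A \<rho>}. cyl \<rho>))"
    using finR sets null by (intro finite_measure_mono) auto
  also have "\<dots> = measure M (\<Union>\<rho>\<in>?R. cyl \<rho>)"
    using finR sets null by (intro measure_Un_null_set) auto
  also have "\<dots> \<le> sum (\<lambda>\<rho>. measure M (cyl \<rho>)) ?R"
    using finR sets by (intro measure_UNION_le) auto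
  finally show ?thesis by (simp add: mcyl)
qed

lemma (in finite_measure) measure_le_of_incseq_cover:
  assumes "\<And>N. T N \<in> sets M" "incseq T" "S \<subseteq> (\<Union>N. T N)" "\<And>N. measure M (S \<inter> T N) \<le> r" "0 \<le> r"
  shows "measure M S \<le> r"
proof (cases "S \<in> sets M")
  case True
  have "(\<lambda>N. measure M (S \<inter> T N)) \<longlonglongrightarrow> measure M (\<Union>N. S \<inter> T N)"
    using True assms(1,2) by (intro finite_Lim_measure_incseq) (auto simp: incseq_def)
  moreover have "(\<Union>N. S \<inter> T N) = S" using assms(3) by blast
  ultimately show ?thesis using assms(4) by (metis LIMSEQ_le_const2)
qed (simp add: measure_notin_sets assms(5))

lemma nb_dstg_le_prefix:
  assumes "enat m \<le> nb_dstg Q A E \<delta> \<omega>"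
  obtains N where "m \<le> card {i. i < N \<and> \<omega> !! i \<in> Dstg Q A E \<delta>}"
proof -
  let ?Z = "{i. \<omega> !! i \<in> Dstg Q A E \<delta>}"
  obtain F where F: "finite F" "card F = m" "F \<subseteq> ?Z"
  proof (cases "finite ?Z")
    case True
    then have "m \<le> card ?Z" using assms by (simp add: nb_dstg_def)
    then show ?thesis using that obtain_subset_with_card_n by metis
  qed (use that infinite_arbitrarily_large in metis)
  obtain N where "F \<subseteq> {..<N}" using finite_nat_bounded[OF F(1)] by blast
  with F have "card F \<le> card {i. i < N \<and> \<omega> !! i \<in> Dstg Q A E \<delta>}"
    by (intro card_mono) auto
  with F that show ?thesis by auto
qed

text \<open>Every distinguishing step separates the true environment \<open>e\<close> from some \<open>e' \<noteq> e\<close>.\<close>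

lemma step_count_Dstg_le_sum:
  assumes "finite E" "e \<in> E"
  shows "step_count (\<lambda>s a. (s, a) \<in> Dstg Q A E \<delta>) \<rho>
           \<le> (\<Sum>e'\<in>E - {e}. step_count (\<lambda>s a. \<delta> e s a \<noteq> \<delta> e' s a) \<rho>)"
proof -
  let ?I = "\<lambda>P. {i. i < length (snd \<rho>) \<and> P (state_before \<rho> i) (fst (snd \<rho> ! i))}"
  have "?I (\<lambda>s a. (s, a) \<in> Dstg Q A E \<delta>) \<subseteq> (\<Union>e'\<in>E - {e}. ?I (\<lambda>s a. \<delta> e s a \<noteq> \<delta> e' s a))"
  proof
    fix i assume "i \<in> ?I (\<lambda>s a. (s, a) \<in> Dstg Q A E \<delta>)"
    moreover define s a where "s = state_before \<rho> i" and "a = fst (snd \<rho> ! i)"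
    ultimately obtain e1 e2 where i: "i < length (snd \<rho>)" "e1 \<in> E" "e2 \<in> E" "\<delta> e1 s a \<noteq> \<delta> e2 s a"
      by (auto simp: Dstg_def)
    then have "\<exists>e'\<in>E - {e}. \<delta> e s a \<noteq> \<delta> e' s a"
      by (cases "\<delta> e s a = \<delta> e1 s a") (metis DiffI singletonD)+
    with i show "i \<in> (\<Union>e'\<in>E - {e}. ?I (\<lambda>s a. \<delta> e s a \<noteq> \<delta> e' s a))"
      by (auto simp: s_def a_def)
  qed
  then have "step_count (\<lambda>s a. (s, a) \<in> Dstg Q A E \<delta>) \<rho>
      \<le> card (\<Union>e'\<in>E - {e}. ?I (\<lambda>s a. \<delta> e s a \<noteq> \<delta> e' s a))"
    unfolding step_count_def using assms(1) by (intro card_mono) auto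
  also have "\<dots> \<le> (\<Sum>e'\<in>E - {e}. step_count (\<lambda>s a. \<delta> e s a \<noteq> \<delta> e' s a) \<rho>)"
    unfolding step_count_def using assms(1) by (intro card_UN_le) auto
  finally show ?thesis .
qed

lemma exists_often_distinguished_env:
  assumes "finite E" "e \<in> E" "0 < J"
    and "card E * J \<le> step_count (\<lambda>s a. (s, a) \<in> Dstg Q A E \<delta>) \<rho>"
  shows "\<exists>e'\<in>E - {e}. J \<le> step_count (\<lambda>s a. \<delta> e s a \<noteq> \<delta> e' s a) \<rho>"
proof (rule ccontr)
  assume none: "\<not> ?thesis"
  have "step_count (\<lambda>s a. \<delta> e s a \<noteq> \<delta> e' s a) \<rho> \<le> J - 1" if "e' \<in> E - {e}" for e'
    using none that by force
  then have "(\<Sum>e'\<in>E - {e}. step_count (\<lambda>s a. \<delta> e s a \<noteq> \<delta> e' s a) \<rho>) \<le> (card E - 1) * (J - 1)"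
    using sum_mono[of "E - {e}" _ "\<lambda>_. J - 1"] assms(1,2) by simp
  also have "\<dots> < card E * J"
    using assms(1-3) by (intro le_less_trans[OF mult_le_mono1 mult_less_mono2]) (auto simp: card_gt_0_iff)
  finally show False
    using step_count_Dstg_le_sum[OF assms(1,2), of Q A \<delta> \<rho>] assms(4) by linarith
qed

lemma (in belief_supermartingale) measure_prefix_often_distinguished_le:
  assumes M: "is_run_measure (\<delta> e) \<sigma> q M" and "0 < J"
  shows "measure M {\<omega>. nsb (prefix_run \<omega> N) \<and>
                        card E * J \<le> step_count (\<lambda>s a. (s, a) \<in> Dstg Q A E \<delta>) (prefix_run \<omega> N)}
           \<le> real (card E - 1) * c ^ J / \<epsilon>"
proof -
  let ?P = "\<lambda>\<rho>. nsb \<rho> \<and> card E * J \<le> step_count (\<lambda>s a. (s, a) \<in> Dstg Q A E \<delta>) \<rho>"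
  have "measure M {\<omega>. ?P (prefix_run \<omega> N)} \<le> sum run_prob {\<rho> \<in> fruns Q A N. ?P \<rho>}"
    by (rule measure_prefix_run_event_le[OF memdp eE qQ strat M])
  also have "\<dots> \<le> real (card E - 1) * c ^ J / \<epsilon>"
    using exists_often_distinguished_env[OF is_MEMDP_finite(3)[OF memdp] eE \<open>0 < J\<close>]
    by (intro sum_run_prob_le) auto
  finally show ?thesis .
qed

lemma (in belief_supermartingale) measure_often_distinguished_never_small_le:
  assumes M: "is_run_measure (\<delta> e) \<sigma> q M" and "0 < J"
  shows "measure M ({\<omega>. enat (card E * J) \<le> nb_dstg Q A E \<delta> \<omega>} \<inter> NeverSmallBelief E \<delta> b \<epsilon>)
           \<le> real (card E - 1) * c ^ J / \<epsilon>"
proof -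
  interpret prob_space M using M by (simp add: is_run_measure_def)
  have sM: "sets M = sets (stream_space (count_space UNIV))" using M by (simp add: is_run_measure_def)
  let ?D = "\<lambda>s a. (s, a) \<in> Dstg Q A E \<delta>"
  define S where "S = {\<omega>. enat (card E * J) \<le> nb_dstg Q A E \<delta> \<omega>} \<inter> NeverSmallBelief E \<delta> b \<epsilon>"
  define T where "T N = {\<omega>. card E * J \<le> step_count ?D (prefix_run \<omega> N)}" for N
  have T_iff: "\<omega> \<in> T N \<longleftrightarrow> card E * J \<le> card {i. i < N \<and> \<omega> !! i \<in> Dstg Q A E \<delta>}" for \<omega> N
    by (simp add: T_def step_count_prefix_run)
  have "measure M S \<le> real (card E - 1) * c ^ J / \<epsilon>"
  proof (rule measure_le_of_incseq_cover)
    show "T N \<in> sets M" for N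
      unfolding T_def by (rule prefix_run_event_in_sets[OF sM])
    show "incseq T"
    proof (intro incseq_SucI subsetI)
      fix N \<omega> assume "\<omega> \<in> T N"
      moreover have "card {i. i < N \<and> \<omega> !! i \<in> Dstg Q A E \<delta>}
          \<le> card {i. i < Suc N \<and> \<omega> !! i \<in> Dstg Q A E \<delta>}"
        by (intro card_mono) auto
      ultimately show "\<omega> \<in> T (Suc N)" unfolding T_iff by linarith
    qed
    show "S \<subseteq> (\<Union>N. T N)"
    proof
      fix \<omega> assume "\<omega> \<in> S"
      then have "enat (card E * J) \<le> nb_dstg Q A E \<delta> \<omega>" by (simp add: S_def)
      then obtain N where "card E * J \<le> card {i. i < N \<and> \<omega> !! i \<in> Dstg Q A E \<delta>}"
        by (rule nb_dstg_le_prefix)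
      then show "\<omega> \<in> (\<Union>N. T N)" using T_iff by blast
    qed
    show "measure M (S \<inter> T N) \<le> real (card E - 1) * c ^ J / \<epsilon>" for N
    proof -
      have "S \<inter> T N \<subseteq> {\<omega>. nsb (prefix_run \<omega> N) \<and> card E * J \<le> step_count ?D (prefix_run \<omega> N)}"
        by (auto simp: S_def T_def NeverSmallBelief_def never_small_belief_frun_def take_prefix_run)
      then have "measure M (S \<inter> T N) \<le> measure M {\<omega>. nsb (prefix_run \<omega> N) \<and>
                                              card E * J \<le> step_count ?D (prefix_run \<omega> N)}"
        by (intro finite_measure_mono prefix_run_event_in_sets[OF sM])
      then show ?thesis
        using measure_prefix_often_distinguished_le[OF M \<open>0 < J\<close>, of N] by linarith
    qed
    show "0 \<le> real (card E - 1) * c ^ J / \<epsilon>"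
      using c_pos eps_pos by simp
  qed
  then show ?thesis by (simp add: S_def)
qed

section \<open>The threshold\<close>

lemma power_one_minus_inverse_le_half:
  assumes "1 \<le> T"
  shows "(1 - 1 / real T) ^ T \<le> 1 / 2"
proof -
  have "(1 - 1 / real T) ^ T \<le> exp (- (1 / real T)) ^ T"
    using assms exp_ge_add_one_self[of "- (1 / real T)"] by (intro power_mono) auto
  also have "\<dots> = exp (-1)"
    using assms by (simp flip: exp_of_nat_mult)
  also have "\<dots> \<le> 1 / 2"
    using exp_ge_add_one_self[of 1] by (simp add: exp_minus field_simps)
  finally show ?thesis .
qed

lemma half_power_ceiling_log_le:
  assumes "0 < \<epsilon>"
  shows "(1 / 2) ^ nat \<lceil>log 2 (1 / \<epsilon>)\<rceil> \<le> (\<epsilon> :: real)"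
proof -
  have "1 / \<epsilon> = 2 powr (log 2 (1 / \<epsilon>))" using assms by simp
  also have "\<dots> \<le> 2 powr (real (nat \<lceil>log 2 (1 / \<epsilon>)\<rceil>))"
    by (intro powr_mono) linarith+
  also have "\<dots> = 2 ^ nat \<lceil>log 2 (1 / \<epsilon>)\<rceil>" by (simp add: powr_realpow)
  finally show ?thesis using assms by (simp add: power_one_over field_simps)
qed

lemma power_threshold_le:
  fixes c \<epsilon> :: real
  assumes "0 \<le> c" "c ^ T \<le> 1 / 2" "(1 / 2) ^ x \<le> \<epsilon>"
  shows "real (k - 1) * c ^ (T * (k + 2 * x)) \<le> \<epsilon>\<^sup>2"
proof -
  have "T * (k + 2 * x) = T * k + T * x * 2" by (simp add: algebra_simps)
  then have "c ^ (T * (k + 2 * x)) = (c ^ T) ^ k * ((c ^ T) ^ x)\<^sup>2"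
    by (simp only: power_add power_mult)
  also have "\<dots> \<le> (1 / 2) ^ k * ((1 / 2) ^ x)\<^sup>2"
    using assms(1,2) by (intro mult_mono power_mono) auto
  finally have "real (k - 1) * c ^ (T * (k + 2 * x)) \<le> (real (k - 1) * (1 / 2) ^ k) * ((1 / 2) ^ x)\<^sup>2"
    by (simp add: mult_left_mono mult.assoc)
  also have "\<dots> \<le> 1 * \<epsilon>\<^sup>2"
  proof (intro mult_mono power_mono)
    have "k - 1 \<le> 2 ^ k"
      using less_exp[of k] by linarith
    then have "real (k - 1) \<le> 2 ^ k"
      by (metis of_nat_le_iff of_nat_numeral of_nat_power)
    then show "real (k - 1) * (1 / 2) ^ k \<le> 1" by (simp add: power_one_over field_simps)
  qed (use assms(3) in auto)
  finally show ?thesis by simp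
qed

definition dstg_threshold ::
  "nat set \<Rightarrow> nat set \<Rightarrow> nat set \<Rightarrow> (nat \<Rightarrow> nat \<Rightarrow> nat \<Rightarrow> nat \<Rightarrow> rat) \<Rightarrow> real \<Rightarrow> nat" where
  "dstg_threshold Q A E \<delta> \<epsilon> =
     card E * (8 * (2 ^ max_bits Q A E \<delta>) ^ 4 * (card E + 2 * nat \<lceil>log 2 (1 / \<epsilon>)\<rceil>))"

lemma measure_dstg_threshold_never_small_le:
  assumes memdp: "is_MEMDP Q A E \<delta>" and "is_distr E b" "q \<in> Q" "is_strategy Q A \<sigma>" "e \<in> E"
    and "0 < \<epsilon>" and M: "is_run_measure (\<delta> e) \<sigma> q M"
  shows "measure M ({\<omega>. enat (dstg_threshold Q A E \<delta> \<epsilon>) \<le> nb_dstg Q A E \<delta> \<omega>}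
                     \<inter> NeverSmallBelief E \<delta> b \<epsilon>) \<le> \<epsilon>"
proof -
  define T :: nat where "T = 8 * (2 ^ max_bits Q A E \<delta>) ^ 4"
  define c where "c = 1 - 1 / real T"
  define J where "J = T * (card E + 2 * nat \<lceil>log 2 (1 / \<epsilon>)\<rceil>)"
  have "0 < (2 ^ max_bits Q A E \<delta> :: nat) ^ 4" by simp
  then have "1 < T" unfolding T_def by linarith
  then have "0 < c" by (simp add: c_def)
  interpret belief_supermartingale Q A E \<delta> b q \<sigma> e \<epsilon> c
    using assms \<open>0 < c\<close> bhattacharyya_distinguishing_le[OF memdp \<open>e \<in> E\<close>]
    by unfold_locales (auto simp: c_def T_def)
  have "0 < J"
    using \<open>1 < T\<close> \<open>e \<in> E\<close> is_MEMDP_finite(3)[OF memdp] by (auto simp: J_def card_gt_0_iff)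
  have "c ^ T \<le> 1 / 2"
    unfolding c_def using \<open>1 < T\<close> by (intro power_one_minus_inverse_le_half) simp
  then have "real (card E - 1) * c ^ J \<le> \<epsilon>\<^sup>2"
    unfolding J_def using \<open>0 < c\<close> \<open>0 < \<epsilon>\<close>
    by (intro power_threshold_le half_power_ceiling_log_le) auto
  then have "real (card E - 1) * c ^ J / \<epsilon> \<le> \<epsilon>"
    using \<open>0 < \<epsilon>\<close> by (simp add: divide_le_eq power2_eq_square)
  moreover have "dstg_threshold Q A E \<delta> \<epsilon> = card E * J"
    by (simp add: dstg_threshold_def J_def T_def)
  ultimately show ?thesis
    using measure_often_distinguished_never_small_le[OF M \<open>0 < J\<close>] by simp
qed

definition dstg_threshold_coeffs :: "nat \<Rightarrow> nat \<Rightarrow> nat \<Rightarrow> real" where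
  "dstg_threshold_coeffs i j h =
     (if (i, j, h) = (2, 4, 0) then 8 else if (i, j, h) = (1, 4, 1) then 16 else 0)"

lemma poly3_dstg_threshold_coeffs:
  "poly3 5 dstg_threshold_coeffs (real (card E)) (2 ^ max_bits Q A E \<delta>) (real (nat \<lceil>log 2 (1 / \<epsilon>)\<rceil>))
     = real (dstg_threshold Q A E \<delta> \<epsilon>)"
proof -
  have "{..<5::nat} = {0, 1, 2, 3, 4}" by auto
  then show ?thesis
    by (simp add: poly3_def dstg_threshold_coeffs_def dstg_threshold_def power2_eq_square algebra_simps)
qed

theorem mainTheorem3:
  shows "\<exists>D c. \<forall>Q A E \<delta>. is_MEMDP Q A E \<delta> \<longrightarrow>
    (\<exists>m :: real \<Rightarrow> nat. \<forall>\<epsilon>::real. 0 < \<epsilon> \<and> \<epsilon> < 1 \<longrightarrow>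
       real (m \<epsilon>) \<le> poly3 D c (real (card E)) (2 ^ max_bits Q A E \<delta>)
                        (real (nat \<lceil>log 2 (1 / \<epsilon>)\<rceil>)) \<and>
       (\<forall>b q \<sigma> e M. is_distr E b \<longrightarrow> q \<in> Q \<longrightarrow> is_strategy Q A \<sigma> \<longrightarrow> e \<in> E \<longrightarrow>
          is_run_measure (\<delta> e) \<sigma> q M \<longrightarrow>
          measure M ({\<omega>. enat (m \<epsilon>) \<le> nb_dstg Q A E \<delta> \<omega>} \<inter> NeverSmallBelief E \<delta> b \<epsilon>) \<le> \<epsilon>))"
  apply (intro exI[of _ 5] exI[of _ dstg_threshold_coeffs] allI impI)
  subgoal for Q A E \<delta>
    using measure_dstg_threshold_never_small_le[of Q A E \<delta>] poly3_dstg_threshold_coeffs[of E Q A \<delta>]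
    by (intro exI[of _ "dstg_threshold Q A E \<delta>"]) (metis order.refl)
  done

end
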